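(* Let $\kappa\ge 2$. If $L_1,\dots,L_t$ are Latin squares of order $\kappa$ such that $L_a$ and $L_b$ are projective for all $a\neq b$, then $t \leq \kappa - 1$.
   Context: A Latin square of order $\kappa$ is a $\kappa\times\kappa$ matrix with entries from $\{1,\dots,\kappa\}$ in which each symbol occurs exactly once in each row and each column. Two Latin squares $L_1=[l^{(1)}_{ij}]$ and $L_2=[l^{(2)}_{ij}]$ of order $\kappa$ are called projective if both have all diagonal entries equal to $1$ and, for every row index $r$ and every row index $s$, there is exactly one column index $c$ with $l^{(1)}_{rc} = l^{(2)}_{sc}$. *)

theory Defs
  imports Main
begin

definition latin_square :: "nat \<Rightarrow> (nat \<Rightarrow> nat \<Rightarrow> nat) \<Rightarrow> bool" where
  "latin_square k L \<longleftrightarrow>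
     (\<forall>i<k. \<forall>j<k. L i j \<in> {1..k}) \<and>
     (\<forall>i<k. \<forall>s\<in>{1..k}. \<exists>!j. j < k \<and> L i j = s) \<and>
     (\<forall>j<k. \<forall>s\<in>{1..k}. \<exists>!i. i < k \<and> L i j = s)"

definition projective :: "nat \<Rightarrow> (nat \<Rightarrow> nat \<Rightarrow> nat) \<Rightarrow> (nat \<Rightarrow> nat \<Rightarrow> nat) \<Rightarrow> bool" where
  "projective k L1 L2 \<longleftrightarrow>
     (\<forall>i<k. L1 i i = 1) \<and> (\<forall>i<k. L2 i i = 1) \<and>
     (\<forall>r<k. \<forall>s<k. \<exists>!c. c < k \<and> L1 r c = L2 s c)"

end

theory Submission
  imports Defs
begin

text \<open>Look at the first row. Every square of the family has a 1 in position (0,0),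
  so its entry in position (0,1) is one of the k - 1 symbols 2..k. Two mutually
  projective squares already agree in column 0 of row 0, so by uniqueness of the
  agreeing column they differ in column 1. Hence the family injects into {2..k}.\<close>

lemma latin_square_range:
  assumes "latin_square k L" "i < k" "j < k"
  shows "L i j \<in> {1..k}"
  using assms unfolding latin_square_def by simp

lemma latin_square_row_inj:
  assumes "latin_square k L" "i < k" "j < k" "j' < k" "L i j = L i j'"
  shows "j = j'"
proof -
  have "\<forall>s\<in>{1..k}. \<exists>!j. j < k \<and> L i j = s"
    using assms(1,2) unfolding latin_square_def by simp
  then have "\<exists>!j''. j'' < k \<and> L i j'' = L i j"
    using latin_square_range[OF assms(1-3)] by (rule bspec)
  then show ?thesis using assms(3-5) by auto
qed

lemma latin_square_off_diagonal:
  assumes "latin_square k L" "L r r = 1" "r < k" "c < k" "c \<noteq> r"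
  shows "L r c \<in> {2..k}"
proof -
  have "L r c \<noteq> L r r" using latin_square_row_inj[OF assms(1,3,4,3)] assms(5) by blast
  then show ?thesis using latin_square_range[OF assms(1,3,4)] assms(2) by auto
qed

lemma projective_diagonal:
  assumes "projective k L1 L2" "i < k"
  shows "L1 i i = 1" "L2 i i = 1"
  using assms unfolding projective_def by auto

lemma projective_off_diagonal_differ:
  assumes "projective k L1 L2" "r < k" "c < k" "c \<noteq> r"
  shows "L1 r c \<noteq> L2 r c"
proof
  assume "L1 r c = L2 r c"
  moreover have "L1 r r = L2 r r" using projective_diagonal[OF assms(1,2)] by simp
  moreover have "\<exists>!c'. c' < k \<and> L1 r c' = L2 r c'"
    using assms(1,2) unfolding projective_def by simp
  ultimately show False using assms(2-4) by blast
qed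

lemma pairwise_projective_diagonal:
  fixes t a :: nat
  assumes "1 < t" "\<forall>a<t. \<forall>b<t. a \<noteq> b \<longrightarrow> projective k (L a) (L b)" "a < t" "i < k"
  shows "L a i i = 1"
proof -
  define b where "b = (if a = 0 then 1 else 0 :: nat)"
  have "b < t" "b \<noteq> a" using assms(1) unfolding b_def by auto
  then show ?thesis using projective_diagonal(1) assms(2-4) by blast
qed

theorem theorem27:
  fixes k t :: nat and L :: "nat \<Rightarrow> nat \<Rightarrow> nat \<Rightarrow> nat"
  assumes "k \<ge> 2"
    and "\<forall>a<t. latin_square k (L a)"
    and "\<forall>a<t. \<forall>b<t. a \<noteq> b \<longrightarrow> projective k (L a) (L b)"
  shows "t \<le> k - 1"
proof (cases "t \<le> 1")
  case True
  then show ?thesis using assms(1) by simp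
next
  case False
  have "0 < k" "1 < k" using assms(1) by auto
  have "inj_on (\<lambda>a. L a 0 1) {..<t}"
  proof (rule inj_onI, rule ccontr)
    fix a b assume "a \<in> {..<t}" "b \<in> {..<t}" "L a 0 1 = L b 0 1" "a \<noteq> b"
    then show False
      using projective_off_diagonal_differ[OF _ \<open>0 < k\<close> \<open>1 < k\<close>] assms(3) by simp
  qed
  moreover have "(\<lambda>a. L a 0 1) ` {..<t} \<subseteq> {2..k}"
  proof (rule image_subsetI)
    fix a assume "a \<in> {..<t}"
    then show "L a 0 1 \<in> {2..k}"
      using latin_square_off_diagonal[of k "L a" 0 1] pairwise_projective_diagonal[of t k L a 0]
        False assms(2,3) \<open>1 < k\<close> by simp
  qed
  ultimately have "card {..<t} \<le> card {2..k}"
    by (rule card_inj_on_le) simp_all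
  then show ?thesis by simp
qed

end
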